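(* There is an absolute constant $C$ such that for every finite set $U$ of size $N\ge 4$ and every real $\Delta\ge 0$ there exists a $(\Delta,L)$-UCS over $U$ with $L(P)\le C\,(H(P)+\Delta+\log_2\log_2 N)$ for every $P\in\mathcal P(U)$. That is, there is a deterministic pair $(E,D)$ with $D(Q,E(P,m))=m$ for all $\Delta$-close $P,Q$ and all $m\in U$, whose expected encoding length under $P$ is $O(H(P)+\Delta+\log\log N)$.
   Context: $\mathcal P(U)$ denotes the set of all probability distributions on the finite set $U$; $\{0,1\}^*$ is the set of finite binary strings and $|x|$ the length of $x$. For $P,Q\in\mathcal P(U)$ and $\Delta\ge0$, $P$ and $Q$ are $\Delta$-close if for all $m\in U$, $\log_2(P(m)/Q(m))\le\Delta$ and $\log_2(Q(m)/P(m))\le\Delta$; $\delta(P,Q)$ is the minimum $\Delta$ for which they are $\Delta$-close. $H(P)=\sum_{m}P(m)\log_2(1/P(m))$ is the binary entropy. A $(\Delta,L)$-UCS (uncertain compression scheme) over $U$, where $L:\mathcal P(U)\to\mathbb R^+$, is a pair of maps $E:\mathcal P(U)\times U\to\{0,1\}^*$ and $D:\mathcal P(U)\times\{0,1\}^*\to U$ such that (i) for every pair $P,Q\in\mathcal P(U)$ that are $\Delta$-close and every $m\in U$, $D(Q,E(P,m))=m$, and (ii) for every $P\in\mathcal P(U)$, $\mathbb E_{m\sim P}[|E(P,m)|]\le L(P)$. *)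

theory Defs
  imports Complex_Main
begin

definition distr :: "nat set \<Rightarrow> (nat \<Rightarrow> real) \<Rightarrow> bool" where
  "distr U P \<longleftrightarrow> (\<forall>m\<in>U. 0 \<le> P m) \<and> (\<forall>m. m \<notin> U \<longrightarrow> P m = 0) \<and> sum P U = 1"

text \<open>Delta-closeness: log2(P m / Q m) \<le> Delta and log2(Q m / P m) \<le> Delta for all m,
written multiplicatively (so zero probabilities are handled: P m = 0 iff Q m = 0).\<close>
definition close :: "nat set \<Rightarrow> real \<Rightarrow> (nat \<Rightarrow> real) \<Rightarrow> (nat \<Rightarrow> real) \<Rightarrow> bool" where
  "close U \<Delta> P Q \<longleftrightarrow> (\<forall>m\<in>U. P m \<le> 2 powr \<Delta> * Q m \<and> Q m \<le> 2 powr \<Delta> * P m)"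

definition entropy2 :: "nat set \<Rightarrow> (nat \<Rightarrow> real) \<Rightarrow> real" where
  "entropy2 U P = (\<Sum>m\<in>U. if P m = 0 then 0 else P m * log 2 (1 / P m))"

definition UCS :: "nat set \<Rightarrow> real \<Rightarrow> ((nat \<Rightarrow> real) \<Rightarrow> real)
    \<Rightarrow> ((nat \<Rightarrow> real) \<Rightarrow> nat \<Rightarrow> bool list) \<Rightarrow> ((nat \<Rightarrow> real) \<Rightarrow> bool list \<Rightarrow> nat) \<Rightarrow> bool" where
  "UCS U \<Delta> L E D \<longleftrightarrow>
     (\<forall>Q w. distr U Q \<longrightarrow> D Q w \<in> U) \<and>
     (\<forall>P Q m. distr U P \<longrightarrow> distr U Q \<longrightarrow> close U \<Delta> P Q \<longrightarrow> m \<in> U \<longrightarrow> D Q (E P m) = m) \<and>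
     (\<forall>P. distr U P \<longrightarrow> (\<Sum>m\<in>U. P m * real (length (E P m))) \<le> L P)"

end

theory Submission
  imports Defs
begin

(* Identify U with {0..N-1} through the rank of its
   elements.  To send m with P m \<approx> 2^-j, the encoder transmits j in unary and a
   modulus q together with rank m mod q, where q separates m from every x with
   P x \<ge> 2^(-j-2\<Delta>) ("heavy" elements).  A decoder knowing only a \<Delta>-close Q
   considers the x with Q x \<ge> 2^(-j-\<Delta>); closeness puts m among them and keeps
   them all heavy, so the residue singles out m.
   The key estimate is that a small separating modulus exists: the rank
   differences are < 2^l (l ~ log N), and a product of positive integers
   below 2^n cannot be divisible by all of 1..2n, because Lcm {1..2n} \<ge> 2^n. *)

section \<open>A lower bound for Lcm {1..2n}\<close>

text \<open>The alternating sum below equals the Beta integral of x^(m-1)(1-x)^r; its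
  denominators all divide Lcm {1..m+r}, which is the source of the Lcm bound.\<close>
definition alt_binom_sum :: "nat \<Rightarrow> nat \<Rightarrow> real" where
  "alt_binom_sum r m = (\<Sum>k\<le>r. (-1)^k * real (r choose k) / real (m + k))"

text \<open>Pascal's rule turns the sum into a finite difference in m.\<close>
lemma alt_binom_sum_Suc:
  assumes "m \<ge> 1"
  shows "alt_binom_sum (Suc r) m = alt_binom_sum r m - alt_binom_sum r (Suc m)"
proof -
  have shift: "alt_binom_sum (Suc r) m = 1 / real m
      + (\<Sum>k\<le>r. (-1)^(Suc k) * real (Suc r choose Suc k) / real (m + Suc k))"
    unfolding alt_binom_sum_def by (subst sum.atMost_Suc_shift) simp
  have pascal: "(\<Sum>k\<le>r. (-1)^(Suc k) * real (Suc r choose Suc k) / real (m + Suc k))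
     = (\<Sum>k\<le>r. (-1)^(Suc k) * real (r choose Suc k) / real (m + Suc k))
       + (\<Sum>k\<le>r. (-1)^(Suc k) * real (r choose k) / real (m + Suc k))"
    unfolding sum.distrib[symmetric]
    by (rule sum.cong) (simp_all add: add_divide_distrib diff_divide_distrib distrib_left)
  have first: "1 / real m + (\<Sum>k\<le>r. (-1)^(Suc k) * real (r choose Suc k) / real (m + Suc k))
      = alt_binom_sum r m"
  proof -
    have "alt_binom_sum r m = (\<Sum>k\<le>Suc r. (-1)^k * real (r choose k) / real (m + k))"
      unfolding alt_binom_sum_def by simp
    also have "\<dots> = 1 / real m + (\<Sum>k\<le>r. (-1)^(Suc k) * real (r choose Suc k) / real (m + Suc k))"
      by (subst sum.atMost_Suc_shift) simp
    finally show ?thesis by simp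
  qed
  have second: "(\<Sum>k\<le>r. (-1)^(Suc k) * real (r choose k) / real (m + Suc k))
      = - alt_binom_sum r (Suc m)"
    unfolding alt_binom_sum_def by (simp add: sum_negf[symmetric])
  show ?thesis using shift pascal first second by linarith
qed

lemma alt_binom_sum_closed:
  assumes "m \<ge> 1"
  shows "alt_binom_sum r m = fact r * fact (m - 1) / fact (m + r)"
  using assms
proof (induction r arbitrary: m)
  case 0
  then show ?case by (simp add: alt_binom_sum_def fact_reduce[of m])
next
  case (Suc r)
  then obtain n where m: "m = Suc n" by (cases m) auto
  define F where "F = (fact (n + r) :: real)"
  have F: "F > 0" unfolding F_def by simp
  have "alt_binom_sum (Suc r) m = alt_binom_sum r m - alt_binom_sum r (Suc m)"
    using Suc.prems by (rule alt_binom_sum_Suc)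
  also have "\<dots> = fact r * fact n / fact (Suc n + r) - fact r * fact (Suc n) / fact (Suc (Suc n) + r)"
    using Suc.IH[of m] Suc.IH[of "Suc m"] m by simp
  also have "\<dots> = fact (Suc r) * fact n / fact (Suc n + Suc r)"
  proof -
    have e1: "fact (Suc n + r) = (real n + real r + 1) * F"
      unfolding F_def by (simp add: algebra_simps)
    have e2: "fact (Suc (Suc n) + r) = (real n + real r + 2) * ((real n + real r + 1) * F)"
      unfolding F_def by (simp add: algebra_simps)
    have e3: "fact (Suc n + Suc r) = (real n + real r + 2) * ((real n + real r + 1) * F)"
      unfolding F_def by (simp add: algebra_simps)
    show ?thesis unfolding e1 e2 e3 fact_Suc using F
      by (simp add: divide_simps) (simp add: algebra_simps)
  qed
  finally show ?case using m by simp
qed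

text \<open>Lcm {1..m+r} times the sum is a positive integer, while the sum itself
  equals 1 / (m * binom(m+r, m)).\<close>
lemma Lcm_ge_binom:
  assumes m: "m \<ge> 1"
  shows "m * ((m + r) choose m) \<le> Lcm {1..m+r}"
proof -
  define Lc where "Lc = Lcm {1..m+r}"
  have "Lc \<noteq> 0" unfolding Lc_def by (subst Lcm_0_iff) auto
  hence Lc_pos: "Lc > 0" by simp
  have dvd: "(m + k) dvd Lc" if "k \<le> r" for k
    unfolding Lc_def using m that by (intro dvd_Lcm_nat) auto
  define z where "z = (\<Sum>k\<le>r. (-1::int)^k * int (r choose k) * int (Lc div (m + k)))"
  have "real Lc * alt_binom_sum r m = (\<Sum>k\<le>r. (-1)^k * real (r choose k) * (real Lc / real (m + k)))"
    unfolding alt_binom_sum_def by (simp add: sum_distrib_left field_simps)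
  also have "\<dots> = of_int z"
    unfolding z_def using dvd by (auto intro!: sum.cong simp: real_of_nat_div)
  finally have integral: "real Lc * alt_binom_sum r m = of_int z" .
  define B where "B = real m * real ((m + r) choose m)"
  have B_pos: "B > 0" unfolding B_def using m by simp
  have "fact m = real m * fact (m - 1)" using m by (cases m) auto
  hence "alt_binom_sum r m * B = 1"
    using alt_binom_sum_closed[OF m, of r] m unfolding B_def
    by (simp add: binomial_fact field_simps)
  hence Lc_eq: "real Lc = of_int z * B" using integral
    by (metis mult.assoc mult.right_neutral)
  hence "z > 0" using Lc_pos B_pos by (metis of_int_0_less_iff of_nat_0_less_iff zero_less_mult_pos2)
  hence "B \<le> real Lc" unfolding Lc_eq using B_pos by simp
  then show ?thesis unfolding B_def Lc_def by (simp flip: of_nat_mult)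
qed

lemma Lcm_ge_pow2:
  assumes n: "n \<ge> 1"
  shows "2 ^ n \<le> Lcm {1..2*n}"
proof -
  have "real (n * ((2*n) choose n)) \<le> real (Lcm {1..2*n})"
    using Lcm_ge_binom[OF n, of n] by (simp only: mult_2 of_nat_le_iff)
  moreover have "4^n / (2 * real n) \<le> real ((2*n) choose n)"
    using n by (intro central_binomial_lower_bound) auto
  hence "4^n / 2 \<le> real n * real ((2*n) choose n)" using n by (simp add: field_simps)
  moreover have "(2::real)^n \<le> 4^n / 2"
  proof -
    have "(4::real)^n = 2^n * 2^n" by (simp flip: power_mult_distrib)
    moreover have "(2::real)^n \<ge> 2" using n by (metis power_one_right power_increasing one_le_numeral)
    ultimately show ?thesis by simp
  qed
  ultimately have "(2::real)^n \<le> real (Lcm {1..2*n})" by (simp only: of_nat_mult)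
  then show ?thesis by (metis of_nat_le_iff of_nat_numeral of_nat_power)
qed

lemma small_common_nondivisor:
  fixes A :: "nat set"
  assumes fin: "finite A" and pos: "0 \<notin> A" and n: "n \<ge> 1" and prod: "\<Prod>A < 2^n"
  shows "\<exists>q\<in>{1..2*n}. \<forall>d\<in>A. \<not> q dvd d"
proof (rule ccontr)
  assume "\<not> ?thesis"
  hence "\<forall>q\<in>{1..2*n}. q dvd \<Prod>A" using fin by (meson dvd_prodI dvd_trans)
  hence "Lcm {1..2*n} dvd \<Prod>A" by (intro Lcm_least) auto
  moreover have "\<Prod>A > 0" using fin pos by (intro prod_pos) (auto intro: gr0I)
  ultimately have "Lcm {1..2*n} \<le> \<Prod>A" by (simp add: dvd_imp_le)
  with Lcm_ge_pow2[OF n] prod show False by linarith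
qed

section \<open>Separating moduli\<close>

definition rank :: "nat set \<Rightarrow> nat \<Rightarrow> nat" where
  "rank U x = card {y\<in>U. y < x}"

lemma rank_less: "finite U \<Longrightarrow> x \<in> U \<Longrightarrow> rank U x < card U"
  unfolding rank_def by (rule psubset_card_mono) auto

lemma rank_strict_mono: "finite U \<Longrightarrow> x \<in> U \<Longrightarrow> x < y \<Longrightarrow> rank U x < rank U y"
  unfolding rank_def by (rule psubset_card_mono) auto

lemma rank_inj: "finite U \<Longrightarrow> x \<in> U \<Longrightarrow> y \<in> U \<Longrightarrow> x \<noteq> y \<Longrightarrow> rank U x \<noteq> rank U y"
  by (metis rank_strict_mono nat_neq_iff)

definition separates :: "nat set \<Rightarrow> nat set \<Rightarrow> nat \<Rightarrow> nat \<Rightarrow> bool" where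
  "separates U T m q \<longleftrightarrow> 0 < q \<and> (\<forall>x\<in>T. x \<noteq> m \<longrightarrow> rank U x mod q \<noteq> rank U m mod q)"

definition sep_modulus :: "nat set \<Rightarrow> nat set \<Rightarrow> nat \<Rightarrow> nat" where
  "sep_modulus U T m = (LEAST q. separates U T m q)"

text \<open>The modulus card U always separates, so sep_modulus is well defined.\<close>
lemma separates_card:
  assumes U: "finite U" and m: "m \<in> U" and TU: "T \<subseteq> U"
  shows "separates U T m (card U)"
proof -
  have "0 < card U" using U m card_gt_0_iff by blast
  then show ?thesis
    unfolding separates_def using m TU rank_less[OF U] rank_inj[OF U] by auto
qed

lemma sep_modulus_separates:
  "finite U \<Longrightarrow> m \<in> U \<Longrightarrow> T \<subseteq> U \<Longrightarrow> separates U T m (sep_modulus U T m)"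
  unfolding sep_modulus_def by (rule LeastI, rule separates_card)

lemma congruent_dvd_dist:
  fixes a b q :: nat
  assumes "a mod q = b mod q"
  shows "q dvd nat \<bar>int a - int b\<bar>"
proof -
  have "int q dvd int a - int b" using assms by (metis of_nat_mod mod_eq_dvd_iff)
  thus ?thesis by (metis int_dvd_int_iff abs_ge_zero int_nat_eq dvd_abs_iff)
qed

lemma prod_less_pow:
  fixes A :: "nat set"
  assumes small: "\<forall>d\<in>A. d < 2^l" and k: "card A \<le> k" "1 \<le> k" and l: "1 \<le> l"
  shows "\<Prod>A < 2 ^ (k * l)"
proof -
  have "\<Prod>A \<le> (2^l - 1) ^ card A"
    using prod_mono[of A "\<lambda>d. d" "\<lambda>_. 2^l - 1"] small by fastforce
  also have "\<dots> \<le> (2^l - 1) ^ k"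
    using k l one_less_power[of "2::nat" l] by (intro power_increasing) auto
  also have "\<dots> < (2^l) ^ k" using k by (intro power_strict_mono) auto
  finally show ?thesis by (simp add: power_mult[symmetric] mult.commute)
qed

text \<open>Ranks below 2^l can be separated by a modulus of size O(card T * l):
  apply the common non-divisor lemma to the rank distances from m.\<close>
lemma sep_modulus_bound:
  assumes U: "finite U" and TU: "T \<subseteq> U" and mT: "m \<in> T"
    and l: "card U \<le> 2 ^ l" "1 \<le> l"
  shows "sep_modulus U T m \<le> 2 * card T * l"
proof -
  have fT: "finite T" using U TU finite_subset by blast
  have m: "m \<in> U" using mT TU by blast
  define dist where "dist x = nat \<bar>int (rank U x) - int (rank U m)\<bar>" for x
  define A where "A = dist ` (T - {m})"
  have dist_bounds: "0 < dist x \<and> dist x < 2^l" if "x \<in> T - {m}" for x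
  proof -
    have xU: "x \<in> U" using that TU by auto
    have "rank U x \<noteq> rank U m" using rank_inj[OF U xU m] that by auto
    moreover have "rank U x < 2^l" "rank U m < 2^l"
      using rank_less[OF U] xU m l(1) by (auto intro: less_le_trans)
    ultimately show ?thesis unfolding dist_def by linarith
  qed
  have cardA: "card A \<le> card T"
    unfolding A_def using fT by (meson card_image_le card_Diff1_le finite_Diff le_trans)
  have cardT: "card T \<ge> 1" using fT mT by (simp add: Suc_le_eq card_gt_0_iff) blast
  have prodA: "\<Prod>A < 2 ^ (card T * l)"
    using prod_less_pow[of A l "card T"] cardA cardT l(2) dist_bounds unfolding A_def by auto
  have finA: "finite A" unfolding A_def using fT by simp
  have posA: "0 \<notin> A" unfolding A_def using dist_bounds by (metis imageE less_irrefl)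
  have "1 \<le> card T * l" using cardT l(2) by simp
  then obtain q where q: "q \<in> {1..2 * (card T * l)}" and nd: "\<forall>d\<in>A. \<not> q dvd d"
    using small_common_nondivisor[OF finA posA _ prodA] by blast
  have "separates U T m q"
    unfolding separates_def
  proof (intro conjI ballI impI)
    show "0 < q" using q by simp
    fix x assume "x \<in> T" "x \<noteq> m"
    hence "dist x \<in> A" unfolding A_def by simp
    thus "rank U x mod q \<noteq> rank U m mod q"
      using nd congruent_dvd_dist unfolding dist_def by blast
  qed
  hence "sep_modulus U T m \<le> q" unfolding sep_modulus_def by (rule Least_le)
  then show ?thesis using q by (simp add: mult.assoc)
qed

section \<open>A self-delimiting code for four numbers\<close>

fun bits :: "nat \<Rightarrow> nat \<Rightarrow> bool list" where
  "bits 0 n = []"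
| "bits (Suc a) n = odd n # bits a (n div 2)"

fun unbits :: "bool list \<Rightarrow> nat" where
  "unbits [] = 0"
| "unbits (b # bs) = (if b then 1 else 0) + 2 * unbits bs"

lemma length_bits [simp]: "length (bits a n) = a"
  by (induction a arbitrary: n) auto

lemma unbits_bits: "unbits (bits a n) = n mod 2^a"
proof (induction a arbitrary: n)
  case 0 then show ?case by simp
next
  case (Suc a)
  have "unbits (bits (Suc a) n) = n mod 2 + 2 * (n div 2 mod 2^a)"
    using Suc.IH by (simp add: mod_2_eq_odd)
  also have "\<dots> = n mod 2^Suc a" by (simp add: mod_mult2_eq)
  finally show ?case .
qed

definition codeword :: "nat \<Rightarrow> nat \<Rightarrow> nat \<Rightarrow> nat \<Rightarrow> bool list" where
  "codeword k a q r = replicate k True @ False # replicate a True @ False # bits a q @ bits a r"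

definition parse :: "bool list \<Rightarrow> nat \<times> nat \<times> nat \<times> nat" where
  "parse w = (let k = length (takeWhile id w); w1 = drop (Suc k) w;
               a = length (takeWhile id w1); w2 = drop (Suc a) w1
            in (k, a, unbits (take a w2), unbits (take a (drop a w2))))"

lemma takeWhile_unary: "takeWhile id (replicate k True @ False # w) = replicate k True"
  by (induction k) auto

lemma drop_unary: "drop (Suc k) (replicate k True @ False # w) = w"
  by (induction k) auto

lemma parse_codeword: "parse (codeword k a q r) = (k, a, q mod 2^a, r mod 2^a)"
proof -
  have "take a (bits a q @ bits a r) = bits a q" "drop a (bits a q @ bits a r) = bits a r"
    by simp_all
  then show ?thesis
    unfolding parse_def codeword_def Let_def takeWhile_unary drop_unary length_replicate
    by (simp add: unbits_bits del: bits.simps)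
qed

lemma length_codeword: "length (codeword k a q r) = k + 3 * a + 2"
  unfolding codeword_def by simp

definition bitlen :: "nat \<Rightarrow> nat" where
  "bitlen q = (LEAST a. q < 2^a)"

lemma less_pow_bitlen: "q < 2 ^ bitlen q"
  unfolding bitlen_def by (rule LeastI_ex) (metis less_exp)

lemma bitlen_pos: "1 \<le> q \<Longrightarrow> 1 \<le> bitlen q"
  using less_pow_bitlen[of q] by (cases "bitlen q") auto

lemma bitlen_le_log:
  assumes q: "1 \<le> q"
  shows "real (bitlen q) \<le> log 2 (real q) + 1"
proof (cases "bitlen q")
  case 0
  then show ?thesis using q by simp
next
  case (Suc b)
  have "2 ^ b \<le> q" using Suc unfolding bitlen_def by (metis lessI not_less_Least not_less)
  hence "(2::real) ^ b \<le> real q" by (metis of_nat_le_iff of_nat_numeral of_nat_power)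
  hence "real b \<le> log 2 (real q)" using q by (simp add: le_log_iff powr_realpow)
  then show ?thesis using Suc by simp
qed

section \<open>Probability levels and heavy sets\<close>

lemma distr_nonneg: "distr U P \<Longrightarrow> m \<in> U \<Longrightarrow> 0 \<le> P m"
  unfolding distr_def by auto

lemma distr_le1: "distr U P \<Longrightarrow> finite U \<Longrightarrow> m \<in> U \<Longrightarrow> P m \<le> 1"
proof -
  assume P: "distr U P" and U: "finite U" "m \<in> U"
  have "P m \<le> sum P U" using P U unfolding distr_def by (intro member_le_sum) auto
  then show ?thesis using P unfolding distr_def by simp
qed

lemma card_heavy_le:
  assumes U: "finite U" and P: "distr U P" and c: "0 < c"
  shows "real (card {x\<in>U. c \<le> P x}) \<le> 1 / c"
proof -
  let ?T = "{x\<in>U. c \<le> P x}"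
  have "real (card ?T) * c = (\<Sum>x\<in>?T. c)" by simp
  also have "\<dots> \<le> (\<Sum>x\<in>?T. P x)" by (rule sum_mono) auto
  also have "\<dots> \<le> (\<Sum>x\<in>U. P x)" using U P unfolding distr_def by (intro sum_mono2) auto
  also have "\<dots> = 1" using P unfolding distr_def by simp
  finally show ?thesis using c by (simp add: field_simps)
qed

definition level :: "real \<Rightarrow> nat" where
  "level p = nat \<lceil>log 2 (1 / p)\<rceil>"

lemma level_le:
  assumes "0 < p" "p \<le> 1"
  shows "2 powr (- real (level p)) \<le> p"
proof -
  have "log 2 (1/p) \<le> real (level p)" unfolding level_def by linarith
  thus ?thesis using assms by (simp add: log_le_iff powr_minus field_simps)
qed

lemma level_less:
  assumes "0 < p" "p \<le> 1"
  shows "real (level p) < log 2 (1 / p) + 1"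
proof -
  have "log 2 (1 / p) \<ge> 0" using assms by simp
  thus ?thesis unfolding level_def by linarith
qed

section \<open>The compression scheme\<close>

definition enc_cands :: "nat set \<Rightarrow> real \<Rightarrow> (nat \<Rightarrow> real) \<Rightarrow> nat \<Rightarrow> nat set" where
  "enc_cands U \<Delta> P m = (if P m = 0 then U
     else {x\<in>U. 2 powr (- real (level (P m)) - 2 * \<Delta>) \<le> P x})"

text \<open>Candidates seen by the decoder for transmitted level code k (0 means P m = 0),
  with slack \<Delta>.\<close>
definition dec_cands :: "nat set \<Rightarrow> real \<Rightarrow> (nat \<Rightarrow> real) \<Rightarrow> nat \<Rightarrow> nat set" where
  "dec_cands U \<Delta> Q k = (if k = 0 then U else {x\<in>U. 2 powr (- real (k - 1) - \<Delta>) \<le> Q x})"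

definition level_code :: "real \<Rightarrow> nat" where
  "level_code p = (if p = 0 then 0 else Suc (level p))"

definition ucs_enc :: "nat set \<Rightarrow> real \<Rightarrow> (nat \<Rightarrow> real) \<Rightarrow> nat \<Rightarrow> bool list" where
  "ucs_enc U \<Delta> P m = (let q = sep_modulus U (enc_cands U \<Delta> P m) m
     in codeword (level_code (P m)) (bitlen q) q (rank U m mod q))"

definition pick :: "nat set \<Rightarrow> nat set \<Rightarrow> nat" where
  "pick U A = (if A \<noteq> {} then (SOME x. x \<in> A) else (SOME x. x \<in> U))"

definition ucs_dec :: "nat set \<Rightarrow> real \<Rightarrow> (nat \<Rightarrow> real) \<Rightarrow> bool list \<Rightarrow> nat" where
  "ucs_dec U \<Delta> Q w = (case parse w of (k, a, q, r) \<Rightarrow>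
     pick U {x \<in> dec_cands U \<Delta> Q k. rank U x mod q = r})"

lemma pick_in: "U \<noteq> {} \<Longrightarrow> A \<subseteq> U \<Longrightarrow> pick U A \<in> U"
  unfolding pick_def by (metis some_in_eq subset_iff)

lemma pick_singleton: "pick U {m} = m"
  unfolding pick_def by simp

lemma ucs_dec_in: "U \<noteq> {} \<Longrightarrow> ucs_dec U \<Delta> Q w \<in> U"
  unfolding ucs_dec_def dec_cands_def by (auto split: prod.split intro!: pick_in)

lemma mem_dec_cands:
  assumes U: "finite U" and P: "distr U P" and cl: "close U \<Delta> P Q" and m: "m \<in> U"
  shows "m \<in> dec_cands U \<Delta> Q (level_code (P m))"
proof (cases "P m = 0")
  case False
  have "2 powr (- real (level (P m))) \<le> P m"
    using False distr_nonneg[OF P m] distr_le1[OF P U m] by (intro level_le) auto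
  also have "P m \<le> 2 powr \<Delta> * Q m" using cl m unfolding close_def by auto
  finally have "2 powr (- real (level (P m)) - \<Delta>) \<le> Q m"
    by (simp add: powr_diff field_simps)
  then show ?thesis unfolding dec_cands_def level_code_def using m False by simp
qed (simp add: dec_cands_def level_code_def m)

lemma dec_cands_subset:
  assumes cl: "close U \<Delta> P Q"
  shows "dec_cands U \<Delta> Q (level_code (P m)) \<subseteq> enc_cands U \<Delta> P m"
proof (cases "P m = 0")
  case False
  show ?thesis
  proof
    fix x assume x: "x \<in> dec_cands U \<Delta> Q (level_code (P m))"
    have xU: "x \<in> U" using x unfolding dec_cands_def by (auto split: if_splits)
    have "2 powr (- real (level (P m)) - \<Delta>) \<le> Q x"
      using x unfolding dec_cands_def level_code_def using False by auto
    also have "Q x \<le> 2 powr \<Delta> * P x" using cl xU unfolding close_def by auto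
    finally have "2 powr (- real (level (P m)) - 2 * \<Delta>) \<le> P x"
      by (simp add: powr_diff powr_add[symmetric] field_simps)
    then show "x \<in> enc_cands U \<Delta> P m" unfolding enc_cands_def using False xU by simp
  qed
qed (simp add: dec_cands_def level_code_def enc_cands_def)

theorem ucs_correct:
  assumes U: "finite U" and P: "distr U P" and cl: "close U \<Delta> P Q" and m: "m \<in> U"
  shows "ucs_dec U \<Delta> Q (ucs_enc U \<Delta> P m) = m"
proof -
  define q where "q = sep_modulus U (enc_cands U \<Delta> P m) m"
  have sep: "separates U (enc_cands U \<Delta> P m) m q"
    unfolding q_def using U m by (intro sep_modulus_separates) (auto simp: enc_cands_def)
  have q_bits: "q < 2 ^ bitlen q" by (rule less_pow_bitlen)
  moreover have "rank U m mod q < 2 ^ bitlen q"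
    using sep q_bits unfolding separates_def by (meson mod_less_divisor order.strict_trans)
  moreover have "{x \<in> dec_cands U \<Delta> Q (level_code (P m)). rank U x mod q = rank U m mod q} = {m}"
    using mem_dec_cands[OF U P cl m] dec_cands_subset[OF cl] sep unfolding separates_def by auto
  ultimately show ?thesis
    unfolding ucs_enc_def ucs_dec_def Let_def q_def[symmetric] parse_codeword
    by (simp add: pick_singleton)
qed

section \<open>Length of the code\<close>

text \<open>With l = bitlen N \<approx> log N, the modulus sent for m is at most
  2 * 2^(level + 2\<Delta>) * l, since at most 2^(level + 2\<Delta>) elements are heavy.\<close>
lemma sep_modulus_enc_bound:
  assumes U: "finite U" and N: "card U \<ge> 1" and D: "\<Delta> \<ge> 0" and P: "distr U P"
    and m: "m \<in> U" and pm: "P m \<noteq> 0"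
  shows "real (sep_modulus U (enc_cands U \<Delta> P m) m)
           \<le> 2 * 2 powr (real (level (P m)) + 2 * \<Delta>) * real (bitlen (card U))"
proof -
  define c where "c = (2::real) powr (- real (level (P m)) - 2 * \<Delta>)"
  define T where "T = enc_cands U \<Delta> P m"
  define l where "l = bitlen (card U)"
  have T: "T = {x\<in>U. c \<le> P x}" unfolding T_def enc_cands_def c_def using pm by simp
  have "c \<le> 2 powr (- real (level (P m)))" unfolding c_def using D by simp
  also have "\<dots> \<le> P m"
    using pm distr_nonneg[OF P m] distr_le1[OF P U m] by (intro level_le) auto
  finally have mT: "m \<in> T" unfolding T using m by simp
  have "real (card T) \<le> 1 / c" unfolding T using U P by (intro card_heavy_le) (simp_all add: c_def)
  also have "1 / c = 2 powr (real (level (P m)) + 2 * \<Delta>)"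
  proof -
    have e: "- real (level (P m)) - 2 * \<Delta> = - (real (level (P m)) + 2 * \<Delta>)" by simp
    show ?thesis unfolding c_def e powr_minus by (simp add: divide_inverse)
  qed
  finally have cardT: "real (card T) \<le> 2 powr (real (level (P m)) + 2 * \<Delta>)" .
  have l: "card U \<le> 2 ^ l" "1 \<le> l"
    using less_pow_bitlen[of "card U"] bitlen_pos[OF N] unfolding l_def by simp_all
  have "sep_modulus U T m \<le> 2 * card T * l"
    using U mT l by (intro sep_modulus_bound) (auto simp: T)
  hence "real (sep_modulus U T m) \<le> 2 * real (card T) * real l"
    by (metis of_nat_le_iff of_nat_mult of_nat_numeral)
  also have "\<dots> \<le> 2 * 2 powr (real (level (P m)) + 2 * \<Delta>) * real l"
    using cardT by (intro mult_right_mono) auto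
  finally show ?thesis unfolding T_def l_def .
qed

text \<open>For N \<ge> 4 the doubly logarithmic term is at least 1; it absorbs all
  additive constants of the length bound.\<close>
lemma loglog_ge1:
  assumes "card U \<ge> 4"
  shows "1 \<le> log 2 (log 2 (real (card U)))"
proof -
  have "log 2 4 \<le> log 2 (real (card U))" using assms by simp
  moreover have "log 2 (4::real) = 2" using log_powr_cancel[of "2::real" 2] by simp
  ultimately have "2 \<le> log 2 (real (card U))" by simp
  thus ?thesis by (simp add: le_log_iff)
qed

lemma log_bitlen_le:
  assumes N: "N \<ge> 4"
  shows "log 2 (real (bitlen N)) \<le> 1 + log 2 (log 2 (real N))"
proof -
  have lg: "2 \<le> log 2 (real N)"
    using loglog_ge1[of "{..<N}"] N by (simp add: le_log_iff)
  have pos: "1 \<le> bitlen N" using N by (intro bitlen_pos) simp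
  have "real (bitlen N) \<le> 2 * log 2 (real N)" using bitlen_le_log[of N] N lg by simp
  hence "log 2 (real (bitlen N)) \<le> log 2 (2 * log 2 (real N))"
    using pos by (subst log_le_cancel_iff) auto
  also have "\<dots> = 1 + log 2 (log 2 (real N))" using lg by (simp add: log_mult)
  finally show ?thesis .
qed

text \<open>The codeword of m costs about 4 log(1/P m) + 6\<Delta> + 3 log log N bits:
  the level in unary plus three fields of about log q bits each.\<close>
lemma ucs_enc_length:
  assumes U: "finite U" and N: "card U \<ge> 4" and D: "\<Delta> \<ge> 0" and P: "distr U P"
    and m: "m \<in> U" and pm: "P m \<noteq> 0"
  shows "real (length (ucs_enc U \<Delta> P m))
    \<le> 4 * log 2 (1 / P m) + 6 * \<Delta> + 3 * log 2 (log 2 (real (card U))) + 16"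
proof -
  define j where "j = level (P m)"
  define q where "q = sep_modulus U (enc_cands U \<Delta> P m) m"
  define l where "l = bitlen (card U)"
  have q1: "1 \<le> q"
    using sep_modulus_separates[OF U m] unfolding q_def separates_def enc_cands_def
    by (simp add: Suc_le_eq)
  have l1: "1 \<le> l" unfolding l_def using N by (intro bitlen_pos) simp
  have "log 2 (real q) \<le> log 2 (2 * 2 powr (real j + 2 * \<Delta>) * real l)"
    using sep_modulus_enc_bound[OF U _ D P m pm] N q1 l1
    unfolding q_def j_def l_def by (subst log_le_cancel_iff) auto
  also have "\<dots> = 1 + (real j + 2 * \<Delta>) + log 2 (real l)"
    using l1 by (simp add: log_mult)
  finally have log_q: "log 2 (real q) \<le> 1 + (real j + 2 * \<Delta>) + log 2 (real l)" .
  have "length (ucs_enc U \<Delta> P m) = Suc j + 3 * bitlen q + 2"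
    unfolding ucs_enc_def Let_def length_codeword level_code_def q_def j_def using pm by simp
  moreover have "real (bitlen q) \<le> log 2 (real q) + 1" using q1 by (rule bitlen_le_log)
  moreover have "real j < log 2 (1 / P m) + 1"
    unfolding j_def using pm distr_nonneg[OF P m] distr_le1[OF P U m] by (intro level_less) auto
  moreover have "log 2 (real l) \<le> 1 + log 2 (log 2 (real (card U)))"
    unfolding l_def using N by (rule log_bitlen_le)
  ultimately show ?thesis using log_q D by simp
qed

lemma entropy2_nonneg:
  assumes U: "finite U" and P: "distr U P"
  shows "0 \<le> entropy2 U P"
  unfolding entropy2_def
proof (rule sum_nonneg)
  fix m assume m: "m \<in> U"
  have "0 \<le> P m" "P m \<le> 1" using distr_nonneg[OF P m] distr_le1[OF P U m] by auto
  then show "0 \<le> (if P m = 0 then 0 else P m * log 2 (1 / P m))" by simp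
qed

lemma ucs_expected_length:
  assumes U: "finite U" and N: "card U \<ge> 4" and D: "\<Delta> \<ge> 0" and P: "distr U P"
  shows "(\<Sum>m\<in>U. P m * real (length (ucs_enc U \<Delta> P m)))
     \<le> 4 * entropy2 U P + 6 * \<Delta> + 19 * log 2 (log 2 (real (card U)))"
proof -
  define LL where "LL = log 2 (log 2 (real (card U)))"
  define K where "K = 6 * \<Delta> + 3 * LL + 16"
  have "P m * real (length (ucs_enc U \<Delta> P m))
          \<le> 4 * (if P m = 0 then 0 else P m * log 2 (1 / P m)) + K * P m" if m: "m \<in> U" for m
  proof (cases "P m = 0")
    case False
    have "P m * real (length (ucs_enc U \<Delta> P m)) \<le> P m * (4 * log 2 (1 / P m) + K)"
      using ucs_enc_length[OF U N D P m False] distr_nonneg[OF P m] unfolding K_def LL_def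
      by (intro mult_left_mono) auto
    then show ?thesis using False by (simp add: algebra_simps)
  qed simp
  hence "(\<Sum>m\<in>U. P m * real (length (ucs_enc U \<Delta> P m)))
     \<le> (\<Sum>m\<in>U. 4 * (if P m = 0 then 0 else P m * log 2 (1 / P m)) + K * P m)"
    by (rule sum_mono)
  also have "\<dots> = 4 * entropy2 U P + K"
    using P unfolding entropy2_def distr_def by (simp add: sum.distrib flip: sum_distrib_left)
  also have "\<dots> \<le> 4 * entropy2 U P + 6 * \<Delta> + 19 * LL"
    using loglog_ge1[OF N] unfolding K_def LL_def by simp
  finally show ?thesis unfolding LL_def .
qed

theorem theorem1:
  shows "\<exists>C::real. \<forall>(U::nat set) \<Delta>::real. finite U \<longrightarrow> card U \<ge> 4 \<longrightarrow> \<Delta> \<ge> 0 \<longrightarrow>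
     (\<exists>L E D. UCS U \<Delta> L E D \<and> (\<forall>P. distr U P \<longrightarrow> 0 < L P) \<and>
        (\<forall>P. distr U P \<longrightarrow>
           L P \<le> C * (entropy2 U P + \<Delta> + log 2 (log 2 (real (card U))))))"
proof (intro exI[of _ 19] allI impI)
  fix U :: "nat set" and \<Delta> :: real
  assume U: "finite U" and N: "card U \<ge> 4" and D: "\<Delta> \<ge> 0"
  define L where "L P = 4 * entropy2 U P + 6 * \<Delta> + 19 * log 2 (log 2 (real (card U)))" for P
  have "U \<noteq> {}" using N by auto
  hence "UCS U \<Delta> L (ucs_enc U \<Delta>) (ucs_dec U \<Delta>)"
    unfolding UCS_def L_def
    using ucs_dec_in ucs_correct[OF U] ucs_expected_length[OF U N D] by simp
  moreover have "0 < L P \<and> L P \<le> 19 * (entropy2 U P + \<Delta> + log 2 (log 2 (real (card U))))"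
    if "distr U P" for P
    using entropy2_nonneg[OF U that] loglog_ge1[OF N] D unfolding L_def by simp
  ultimately show "\<exists>L E D. UCS U \<Delta> L E D \<and> (\<forall>P. distr U P \<longrightarrow> 0 < L P) \<and>
      (\<forall>P. distr U P \<longrightarrow> L P \<le> 19 * (entropy2 U P + \<Delta> + log 2 (log 2 (real (card U)))))"
    by (intro exI[of _ L] exI[of _ "ucs_enc U \<Delta>"] exI[of _ "ucs_dec U \<Delta>"]) blast
qed

end
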